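(* Let $R$ be a regular run, $x$ a track, and $0=t_0<t_1<t_2<\cdots$ the significant moments of $x$. Then: (1) $\mathrm{Deadline}(x)=\infty$ at $0$ and over every interval $(t_{3i},t_{3i+1}]$, and $\mathrm{Deadline}(x)=t_{3i+1}+W$ over every interval $(t_{3i+1},t_{3i+3}]$ (and if the sequence is finite with last element $t_k$, then $\mathrm{Deadline}(x)=\infty$ over $(t_k,\infty)$); (2) if $0\le a<b<\infty$ and $\mathrm{TrackStatus}(x)\neq\text{incrossing}$ over $(a,b)$, then $\mathrm{Deadline}(x)\ge b-\Delta_{close}$ over $(a,b)$.
   Context: Setting (evolving algebra for the railroad crossing). States are structures over a vocabulary containing: a finite universe Tracks; the reals and ExtendedReals $=\mathbb{R}\cup\{\infty\}$ with standard $<$ and $+$ ($\infty$ largest); a nullary real-valued symbol $\mathrm{CT}$ (current time); positive real constants $d_{close},d_{open},d_{min},d_{max}$ with $d_{close}<d_{min}\le d_{max}$; a unary function TrackStatus from Tracks to $\{\text{empty},\text{coming},\text{incrossing}\}$; a unary function Deadline from Tracks to ExtendedReals; a nullary Dir with values in $\{\text{open},\text{close}\}$; a nullary GateStatus with values in $\{\text{opened},\text{closed}\}$. Put $W=d_{min}-d_{close}$ and $\Delta_{close}=d_{close}+(d_{max}-d_{min})=d_{max}-W$. For a track $x$, $s(x)$ is the condition [$\mathrm{TrackStatus}(x)=\text{empty}$ or $\mathrm{CT}+d_{open}<\mathrm{Deadline}(x)$], and SafeToOpen is $\forall x\in\mathrm{Tracks}\ s(x)$. The program has two modules (agents). Gate: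 simultaneously OpenGate "if Dir=open then GateStatus:=opened" and CloseGate "if Dir=close then GateStatus:=closed". Controller: simultaneously, for every track $x$, SetDeadline$(x)$ "if TrackStatus$(x)$=coming and Deadline$(x)=\infty$ then Deadline$(x):=\mathrm{CT}+W$", SignalClose$(x)$ "if $\mathrm{CT}=$Deadline$(x)$ then Dir:=close", ClearDeadline$(x)$ "if TrackStatus$(x)$=empty and Deadline$(x)<\infty$ then Deadline$(x):=\infty$", together with SignalOpen "if Dir=close and SafeToOpen then Dir:=open". Executing a module means computing all updates it generates in the current state and performing them simultaneously (nothing happens if the update set is inconsistent). A module is enabled at a state if its update set is consistent and contains an update that changes the state. TrackStatus is external (changed only by the environment); Deadline, Dir, GateStatus are internal (changed only by the modules); other symbols are static. Runs: for $t\mapsto R(t)$, $t\in[0,\infty)$, let $\rho(t)$ be the reduct of $R(t)$ without CT. $R$ is a pre-run if all $R(t)$ share a superuniverse, $\mathrm{CT}=t$ in $R(t)$, and for every $\tau>0$ there are $0=t_0<\dots<t_n=\tau$ with $\rho$ constant on each $(t_i,t_{i+1})$. For a term $e$ (free variables fixed), $e_t$ is its value in $R(t)$, $e_{t+}$ (resp. $e_{t-}$, $t>0$) its constant value on some $(t,t+\epsilon)$ (resp. $(t-\epsilon,t)$); likewise $\rho(t\pm)$. $e$ holds over an interval if it holds at each point; $e$ becomes (is set to) $a$ at $t$ if $e_{t-}\ne a=e_t$ or $e_t\neq a=e_{t+}$. A pre-run is a run if (i) whenever $\rho(t+)\neq\rho(t)$, $\rho(t+)$ is the CT-free reduct of the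 result of executing some modules at $R(t)$ (these agents fire at $t$), with external functions equal in $\rho(t)$ and $\rho(t+)$; (ii) whenever $t>0$ and $\rho(t)\ne\rho(t-)$, they differ only in external functions. An agent is immediate if it fires at every moment it is enabled; bounded if immediate or there is $b>0$ with no interval $(t,t+b)$ over which it is enabled but never fires. Initial states: TrackStatus$(x)$=empty and Deadline$(x)=\infty$ for every track $x$. A regular run is a run $R$ with $R(0)$ initial such that: (Train Motion) for each track $x$ there is a finite or infinite sequence $0=t_0<t_1<t_2<\cdots$ (the significant moments of $x$) with TrackStatus$(x)$=empty over each $[t_{3i},t_{3i+1})$, =coming over each $[t_{3i+1},t_{3i+2})$ where $d_{min}\le t_{3i+2}-t_{3i+1}\le d_{max}$, =incrossing over each $[t_{3i+2},t_{3i+3})$, and, if the sequence is finite with last element $t_k$, then $3\mid k$ and TrackStatus$(x)$=empty over $[t_k,\infty)$; (Controller Timing) Controller is immediate; (Gate Timing) Gate is bounded, there is no interval $(t,t+d_{close})$ over which Dir=close and GateStatus=opened both hold, and no interval $(t,t+d_{open})$ over which Dir=open and GateStatus=closed both hold. *)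

theory Defs
  imports Complex_Main "HOL-Library.Extended_Nat"
begin

datatype xreal = Fin real | PInf

fun xlt :: "xreal \<Rightarrow> xreal \<Rightarrow> bool" where
  "xlt (Fin a) (Fin b) = (a < b)"
| "xlt (Fin a) PInf = True"
| "xlt PInf _ = False"

definition xle :: "xreal \<Rightarrow> xreal \<Rightarrow> bool" where
  "xle a b \<longleftrightarrow> xlt a b \<or> a = b"

datatype tstat = Empty | Coming | Incrossing
datatype dirval = Open | Close
datatype gstat = Opened | Closed
datatype agent = Gate | Controller

text \<open>CT-free part of a state (the reduct \<rho>(t)); CT is the time parameter.
  Tracks is the finite type 'tr.\<close>
record 'tr st =
  trackstatus :: "'tr \<Rightarrow> tstat"
  deadline :: "'tr \<Rightarrow> xreal"
  dir :: dirval
  gatestatus :: gstat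

record 'tr upd =
  uDL :: "('tr \<times> xreal) set"
  uDir :: "dirval set"
  uGS :: "gstat set"

definition W :: "real \<Rightarrow> real \<Rightarrow> real" where
  "W dclose dmin = dmin - dclose"

definition Delta_close :: "real \<Rightarrow> real \<Rightarrow> real \<Rightarrow> real" where
  "Delta_close dclose dmin dmax = dclose + (dmax - dmin)"

definition safe_to_open :: "real \<Rightarrow> real \<Rightarrow> 'tr st \<Rightarrow> bool" where
  "safe_to_open dopen ct s \<longleftrightarrow>
     (\<forall>x. trackstatus s x = Empty \<or> xlt (Fin (ct + dopen)) (deadline s x))"

definition upd_gate :: "'tr st \<Rightarrow> 'tr upd" where
  "upd_gate s = \<lparr> uDL = {}, uDir = {},
     uGS = {g. (dir s = Open \<and> g = Opened) \<or> (dir s = Close \<and> g = Closed)} \<rparr>"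

definition upd_ctrl :: "real \<Rightarrow> real \<Rightarrow> real \<Rightarrow> real \<Rightarrow> 'tr st \<Rightarrow> 'tr upd" where
  "upd_ctrl dclose dopen dmin ct s = \<lparr>
     uDL = {(x, a). (trackstatus s x = Coming \<and> deadline s x = PInf \<and> a = Fin (ct + W dclose dmin))
                  \<or> (trackstatus s x = Empty \<and> xlt (deadline s x) PInf \<and> a = PInf)},
     uDir = {d. (d = Close \<and> (\<exists>x. deadline s x = Fin ct))
              \<or> (d = Open \<and> dir s = Close \<and> safe_to_open dopen ct s)},
     uGS = {} \<rparr>"

definition upd_of :: "real \<Rightarrow> real \<Rightarrow> real \<Rightarrow> agent \<Rightarrow> real \<Rightarrow> 'tr st \<Rightarrow> 'tr upd" where
  "upd_of dclose dopen dmin a ct s =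
     (case a of Gate \<Rightarrow> upd_gate s | Controller \<Rightarrow> upd_ctrl dclose dopen dmin ct s)"

definition consistent :: "'tr upd \<Rightarrow> bool" where
  "consistent U \<longleftrightarrow>
     (\<forall>x a b. (x, a) \<in> uDL U \<longrightarrow> (x, b) \<in> uDL U \<longrightarrow> a = b)
   \<and> (\<forall>d\<in>uDir U. \<forall>e\<in>uDir U. d = e)
   \<and> (\<forall>g\<in>uGS U. \<forall>h\<in>uGS U. g = h)"

definition apply_upd :: "'tr upd \<Rightarrow> 'tr st \<Rightarrow> 'tr st" where
  "apply_upd U s = s\<lparr>
     deadline := (\<lambda>x. if \<exists>a. (x, a) \<in> uDL U then (THE a. (x, a) \<in> uDL U) else deadline s x),
     dir := (if uDir U = {} then dir s else the_elem (uDir U)),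
     gatestatus := (if uGS U = {} then gatestatus s else the_elem (uGS U)) \<rparr>"

definition exec :: "real \<Rightarrow> real \<Rightarrow> real \<Rightarrow> agent set \<Rightarrow> real \<Rightarrow> 'tr st \<Rightarrow> 'tr st" where
  "exec dclose dopen dmin M ct s =
     (let U = \<lparr> uDL = (\<Union>a\<in>M. uDL (upd_of dclose dopen dmin a ct s)),
                uDir = (\<Union>a\<in>M. uDir (upd_of dclose dopen dmin a ct s)),
                uGS = (\<Union>a\<in>M. uGS (upd_of dclose dopen dmin a ct s)) \<rparr>
      in if consistent U then apply_upd U s else s)"

definition changes :: "'tr upd \<Rightarrow> 'tr st \<Rightarrow> bool" where
  "changes U s \<longleftrightarrow>
     (\<exists>(x, v)\<in>uDL U. deadline s x \<noteq> v) \<or> (\<exists>d\<in>uDir U. dir s \<noteq> d) \<or> (\<exists>g\<in>uGS U. gatestatus s \<noteq> g)"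

definition enabled :: "real \<Rightarrow> real \<Rightarrow> real \<Rightarrow> agent \<Rightarrow> real \<Rightarrow> 'tr st \<Rightarrow> bool" where
  "enabled dclose dopen dmin a ct s \<longleftrightarrow>
     consistent (upd_of dclose dopen dmin a ct s) \<and> changes (upd_of dclose dopen dmin a ct s) s"

definition pre_run :: "(real \<Rightarrow> 'tr st) \<Rightarrow> bool" where
  "pre_run \<rho> \<longleftrightarrow>
     (\<forall>\<tau>>0. \<exists>ts :: real list. length ts \<ge> 2 \<and> ts ! 0 = 0 \<and> last ts = \<tau> \<and> sorted_wrt (<) ts
        \<and> (\<forall>i. Suc i < length ts \<longrightarrow> (\<exists>c. \<forall>u\<in>{ts ! i<..<ts ! Suc i}. \<rho> u = c)))"

definition rlim :: "(real \<Rightarrow> 'a) \<Rightarrow> real \<Rightarrow> 'a" where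
  "rlim \<rho> t = (THE c. \<exists>e>0. \<forall>u\<in>{t<..<t+e}. \<rho> u = c)"

definition llim :: "(real \<Rightarrow> 'a) \<Rightarrow> real \<Rightarrow> 'a" where
  "llim \<rho> t = (THE c. \<exists>e>0. \<forall>u\<in>{t-e<..<t}. \<rho> u = c)"

definition is_run :: "real \<Rightarrow> real \<Rightarrow> real \<Rightarrow> (real \<Rightarrow> 'tr st) \<Rightarrow> bool" where
  "is_run dclose dopen dmin \<rho> \<longleftrightarrow> pre_run \<rho>
   \<and> (\<forall>t\<ge>0. rlim \<rho> t \<noteq> \<rho> t \<longrightarrow>
        (\<exists>M. rlim \<rho> t = exec dclose dopen dmin M t (\<rho> t)
             \<and> trackstatus (rlim \<rho> t) = trackstatus (\<rho> t)))
   \<and> (\<forall>t>0. llim \<rho> t \<noteq> \<rho> t \<longrightarrow>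
        deadline (llim \<rho> t) = deadline (\<rho> t) \<and> dir (llim \<rho> t) = dir (\<rho> t)
        \<and> gatestatus (llim \<rho> t) = gatestatus (\<rho> t))"

definition fires :: "real \<Rightarrow> real \<Rightarrow> real \<Rightarrow> (real \<Rightarrow> 'tr st) \<Rightarrow> agent \<Rightarrow> real \<Rightarrow> bool" where
  "fires dclose dopen dmin \<rho> a t \<longleftrightarrow> rlim \<rho> t \<noteq> \<rho> t \<and>
     (\<exists>M. a \<in> M \<and> rlim \<rho> t = exec dclose dopen dmin M t (\<rho> t)
          \<and> trackstatus (rlim \<rho> t) = trackstatus (\<rho> t))"

definition immediate :: "real \<Rightarrow> real \<Rightarrow> real \<Rightarrow> (real \<Rightarrow> 'tr st) \<Rightarrow> agent \<Rightarrow> bool" where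
  "immediate dclose dopen dmin \<rho> a \<longleftrightarrow>
     (\<forall>t\<ge>0. enabled dclose dopen dmin a t (\<rho> t) \<longrightarrow> fires dclose dopen dmin \<rho> a t)"

definition bounded_agent :: "real \<Rightarrow> real \<Rightarrow> real \<Rightarrow> (real \<Rightarrow> 'tr st) \<Rightarrow> agent \<Rightarrow> bool" where
  "bounded_agent dclose dopen dmin \<rho> a \<longleftrightarrow> immediate dclose dopen dmin \<rho> a \<or>
     (\<exists>b>0. \<not> (\<exists>t\<ge>0. (\<forall>s\<in>{t<..<t+b}. enabled dclose dopen dmin a s (\<rho> s))
                      \<and> (\<forall>s\<in>{t<..<t+b}. \<not> fires dclose dopen dmin \<rho> a s)))"

definition initial_state :: "'tr st \<Rightarrow> bool" where
  "initial_state s \<longleftrightarrow> (\<forall>x. trackstatus s x = Empty \<and> deadline s x = PInf)"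

text \<open>Significant moments ts 0 < ts 1 < ... of track x; indices range over
  {i. enat i \<le> K}; K = \<infinity> means the sequence is infinite, K = enat k means
  the last element is ts k.\<close>
definition significant_moments ::
  "real \<Rightarrow> real \<Rightarrow> (real \<Rightarrow> 'tr st) \<Rightarrow> 'tr \<Rightarrow> (nat \<Rightarrow> real) \<Rightarrow> enat \<Rightarrow> bool" where
  "significant_moments dmin dmax \<rho> x ts K \<longleftrightarrow>
     ts 0 = 0
   \<and> (\<forall>i. enat (Suc i) \<le> K \<longrightarrow> ts i < ts (Suc i))
   \<and> (\<forall>i. enat (3*i+1) \<le> K \<longrightarrow>
        (\<forall>t\<in>{ts (3*i)..<ts (3*i+1)}. trackstatus (\<rho> t) x = Empty))
   \<and> (\<forall>i. enat (3*i+2) \<le> K \<longrightarrow>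
        (\<forall>t\<in>{ts (3*i+1)..<ts (3*i+2)}. trackstatus (\<rho> t) x = Coming)
        \<and> dmin \<le> ts (3*i+2) - ts (3*i+1) \<and> ts (3*i+2) - ts (3*i+1) \<le> dmax)
   \<and> (\<forall>i. enat (3*i+3) \<le> K \<longrightarrow>
        (\<forall>t\<in>{ts (3*i+2)..<ts (3*i+3)}. trackstatus (\<rho> t) x = Incrossing))
   \<and> (\<forall>k. K = enat k \<longrightarrow> 3 dvd k \<and> (\<forall>t\<ge>ts k. trackstatus (\<rho> t) x = Empty))"

definition regular_run ::
  "real \<Rightarrow> real \<Rightarrow> real \<Rightarrow> real \<Rightarrow> (real \<Rightarrow> ('tr::finite) st) \<Rightarrow> bool" where
  "regular_run dclose dopen dmin dmax \<rho> \<longleftrightarrow>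
     is_run dclose dopen dmin \<rho>
   \<and> initial_state (\<rho> 0)
   \<and> (\<forall>x. \<exists>ts K. significant_moments dmin dmax \<rho> x ts K)
   \<and> immediate dclose dopen dmin \<rho> Controller
   \<and> bounded_agent dclose dopen dmin \<rho> Gate
   \<and> \<not> (\<exists>t\<ge>0. \<forall>s\<in>{t<..<t+dclose}. dir (\<rho> s) = Close \<and> gatestatus (\<rho> s) = Opened)
   \<and> \<not> (\<exists>t\<ge>0. \<forall>s\<in>{t<..<t+dopen}. dir (\<rho> s) = Open \<and> gatestatus (\<rho> s) = Closed)"

end

theory Submission
  imports Defs
begin

text \<open>The deadline of a track is predicted in closed form from its significant moments:
  it is \<infinity> while the track is empty and ts (3i+1) + W from the moment the train is coming
  until the track is empty again. The run follows this prediction, by induction over time on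
  [0, \<infinity>): jumps from the left only touch external functions, so the deadline at t is the
  one just before t, and just after t it is the result of the immediate controller. The
  prediction itself keeps the controller's update set consistent, because a deadline equal to
  CT only occurs while the track is coming, which rules out SignalOpen at that moment.
  Part (2) follows since the coming phase lasts at most dmax.\<close>

section \<open>Significant moments and phases\<close>

lemma xle_Fin_Fin [simp]: "xle (Fin a) (Fin b) \<longleftrightarrow> a \<le> b"
  by (auto simp: xle_def)

lemma xle_PInf [simp]: "xle a PInf"
  by (cases a) (auto simp: xle_def)

lemma enat_le_downclosed: "enat j \<le> K \<Longrightarrow> i \<le> j \<Longrightarrow> enat i \<le> K"
  by (meson enat_ord_simps(1) order_trans)

lemma ex_crossing_index:
  fixes P :: "nat \<Rightarrow> bool"
  assumes "P 0" "\<not> P m" "enat m \<le> K"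
  shows "\<exists>n. enat (Suc n) \<le> K \<and> P n \<and> \<not> P (Suc n)"
proof -
  obtain n where "n < m" "P n" "\<not> P (Suc n)"
    using ex_least_nat_less[of "\<lambda>i. \<not> P i" m] assms(1,2) by auto
  then show ?thesis
    using enat_le_downclosed[OF assms(3), of "Suc n"] by auto
qed

lemma mod3_cases:
  fixes n :: nat
  obtains (empty) q where "n = 3*q" | (coming) q where "n = 3*q+1" | (crossing) q where "n = 3*q+2"
proof -
  have "n mod 3 = 0 \<or> n mod 3 = 1 \<or> n mod 3 = 2" by presburger
  then show ?thesis using that div_mult_mod_eq[of n 3] by (metis add.commute add_cancel_right_left mult.commute)
qed

definition phase_status :: "nat \<Rightarrow> tstat" where
  "phase_status n = (if n mod 3 = 0 then Empty else if n mod 3 = 1 then Coming else Incrossing)"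

text \<open>Phases are closed on the right, as the intervals of the deadline law are,
  whereas the track status is constant on the right-open intervals [ts n, ts (n+1)).\<close>
definition in_phase :: "(nat \<Rightarrow> real) \<Rightarrow> enat \<Rightarrow> nat \<Rightarrow> real \<Rightarrow> bool" where
  "in_phase ts K n t \<longleftrightarrow> enat (Suc n) \<le> K \<and> ts n < t \<and> t \<le> ts (Suc n)"

definition phase_deadline :: "real \<Rightarrow> (nat \<Rightarrow> real) \<Rightarrow> nat \<Rightarrow> xreal" where
  "phase_deadline w ts n = (if n mod 3 = 0 then PInf else Fin (ts (3 * (n div 3) + 1) + w))"

text \<open>Stated with Suc since the simplifier normalises 3*q+1 to Suc (3*q).\<close>
lemma phase_status_simps [simp]:
  "phase_status (3*q) = Empty"
  "phase_status (Suc (3*q)) = Coming"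
  "phase_status (Suc (Suc (3*q))) = Incrossing"
  by (simp_all add: phase_status_def mod_Suc)

lemma phase_deadline_simps [simp]:
  "phase_deadline w ts (3*q) = PInf"
  "phase_deadline w ts (Suc (3*q)) = Fin (ts (Suc (3*q)) + w)"
  "phase_deadline w ts (Suc (Suc (3*q))) = Fin (ts (Suc (3*q)) + w)"
  by (simp_all add: phase_deadline_def mod_Suc div_Suc)

definition predicted_deadline :: "real \<Rightarrow> (nat \<Rightarrow> real) \<Rightarrow> enat \<Rightarrow> real \<Rightarrow> xreal" where
  "predicted_deadline w ts K t =
     (if \<exists>n. in_phase ts K n t then phase_deadline w ts (THE n. in_phase ts K n t) else PInf)"

text \<open>The combined effect of SetDeadline and ClearDeadline on track y when the controller
  fires at time ct.\<close>
definition next_deadline :: "real \<Rightarrow> real \<Rightarrow> 'tr st \<Rightarrow> 'tr \<Rightarrow> xreal" where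
  "next_deadline w ct s y =
     (if trackstatus s y = Coming \<and> deadline s y = PInf then Fin (ct + w)
      else if trackstatus s y = Empty then PInf else deadline s y)"

lemma next_deadline_phase:
  assumes "trackstatus s y = phase_status n"
    and "deadline s y = phase_deadline w ts n
         \<or> (\<exists>m. n = Suc m \<and> ct = ts n \<and> deadline s y = phase_deadline w ts m)"
  shows "next_deadline w ct s y = phase_deadline w ts n"
proof (cases n rule: mod3_cases)
  case (empty q)
  then show ?thesis using assms(1) by (simp add: next_deadline_def)
next
  case (coming q)
  then have "n = Suc m \<Longrightarrow> m = 3*q" for m by simp
  then show ?thesis using assms coming by (auto simp: next_deadline_def)
next
  case (crossing q)
  then have "n = Suc m \<Longrightarrow> m = 3*q+1" for m by simp
  then show ?thesis using assms crossing by (auto simp: next_deadline_def)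
qed

locale track_schedule =
  fixes dmin dmax :: real and \<rho> :: "real \<Rightarrow> 'tr st" and x :: 'tr
    and ts :: "nat \<Rightarrow> real" and K :: enat
  assumes moments: "significant_moments dmin dmax \<rho> x ts K"
    and dmin_pos: "0 < dmin"
begin

lemma ts_0: "ts 0 = 0"
  using moments unfolding significant_moments_def by blast

lemma ts_less: "enat j \<le> K \<Longrightarrow> i < j \<Longrightarrow> ts i < ts j"
proof (induction j)
  case 0
  then show ?case by simp
next
  case (Suc j)
  have "enat j \<le> K" using enat_le_downclosed[OF Suc.prems(1)] by simp
  moreover have "ts j < ts (Suc j)"
    using moments Suc.prems(1) unfolding significant_moments_def by blast
  ultimately show ?case using Suc.IH Suc.prems(2) by (cases "i = j") auto
qed

lemma ts_le: "enat j \<le> K \<Longrightarrow> i \<le> j \<Longrightarrow> ts i \<le> ts j"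
  by (metis le_neq_implies_less less_imp_le order_refl ts_less)

lemma ts_nonneg: "enat j \<le> K \<Longrightarrow> 0 \<le> ts j"
  using ts_le[of j 0] ts_0 by simp

lemma coming_duration:
  "enat (3*i+2) \<le> K \<Longrightarrow> dmin \<le> ts (3*i+2) - ts (3*i+1) \<and> ts (3*i+2) - ts (3*i+1) \<le> dmax"
  using moments unfolding significant_moments_def by blast

lemma crossing_completes:
  assumes "enat (3*i+2) \<le> K"
  shows "enat (Suc (3*i+2)) \<le> K"
proof (cases K)
  case (enat k)
  then have "3 dvd k" "3*i+2 \<le> k" using moments assms unfolding significant_moments_def by auto
  then have "Suc (3*i+2) \<le> k" by presburger
  then show ?thesis using enat by simp
qed simp

lemma ts_unbounded:
  assumes "K = \<infinity>"
  shows "\<exists>n. t < ts n"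
proof -
  have "real j * dmin \<le> ts (3*j+1)" for j
  proof (induction j)
    case 0
    then show ?case using ts_less[of 1 0] ts_0 assms by simp
  next
    case (Suc j)
    have "dmin \<le> ts (3*j+2) - ts (3*j+1)" using coming_duration assms by simp
    moreover have "ts (3*j+2) < ts (3*Suc j+1)" using ts_less assms by simp
    ultimately show ?case using Suc.IH by (simp add: algebra_simps)
  qed
  moreover obtain j where "t < real j * dmin" using ex_less_of_nat_mult[OF dmin_pos] by blast
  ultimately show ?thesis by (meson order_less_le_trans)
qed

lemma trackstatus_phase:
  assumes "enat (Suc n) \<le> K" "ts n \<le> t" "t < ts (Suc n)"
  shows "trackstatus (\<rho> t) x = phase_status n"
proof (cases n rule: mod3_cases)
  case (crossing q)
  then have "Suc n = 3*q+3" by simp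
  then have "\<forall>t\<in>{ts (3*q+2)..<ts (3*q+3)}. trackstatus (\<rho> t) x = Incrossing"
    using moments assms(1) unfolding significant_moments_def by metis
  moreover have "phase_status n = Incrossing" using crossing by simp
  ultimately show ?thesis using assms(2,3) \<open>Suc n = 3*q+3\<close> crossing by (metis atLeastLessThan_iff)
qed (use moments assms in \<open>auto simp: significant_moments_def\<close>)

lemma trackstatus_final: "K = enat k \<Longrightarrow> ts k \<le> t \<Longrightarrow> trackstatus (\<rho> t) x = Empty"
  using moments unfolding significant_moments_def by blast

lemma moments_cover:
  assumes "P 0" "\<And>n. t < ts n \<Longrightarrow> \<not> P n"
  shows "(\<exists>n. enat (Suc n) \<le> K \<and> P n \<and> \<not> P (Suc n)) \<or> (\<exists>k. K = enat k \<and> P k)"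
proof (cases K)
  case (enat k)
  then show ?thesis using ex_crossing_index[of P k K] assms(1) by (cases "P k") auto
next
  case infinity
  then obtain m where "t < ts m" using ts_unbounded by blast
  then show ?thesis using ex_crossing_index[of P m K] assms(1) assms(2) infinity by auto
qed

lemma in_phase_unique:
  assumes "in_phase ts K n t" "in_phase ts K m t"
  shows "m = n"
proof -
  have "\<not> m < n" if "in_phase ts K n t" "in_phase ts K m t" for m n
  proof
    assume "m < n"
    then have "ts (Suc m) \<le> ts n"
      using that(1) ts_le enat_le_downclosed unfolding in_phase_def by (meson Suc_leI le_SucI order_refl)
    then show False using that unfolding in_phase_def by auto
  qed
  then show ?thesis using assms by (meson linorder_neqE_nat)
qed

lemma predicted_deadline_in_phase:
  assumes "in_phase ts K n t"
  shows "predicted_deadline w ts K t = phase_deadline w ts n"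
proof -
  have "(THE m. in_phase ts K m t) = n"
    using assms in_phase_unique by blast
  then show ?thesis using assms unfolding predicted_deadline_def by auto
qed

lemma predicted_deadline_final:
  assumes "K = enat k" "ts k < t"
  shows "predicted_deadline w ts K t = PInf"
proof -
  have "\<not> in_phase ts K n t" for n
    using assms ts_le[of k "Suc n"] unfolding in_phase_def by auto
  then show ?thesis unfolding predicted_deadline_def by auto
qed

lemma predicted_deadline_nonpos:
  assumes "t \<le> 0"
  shows "predicted_deadline w ts K t = PInf"
proof -
  have "\<not> in_phase ts K n t" for n
    using assms ts_nonneg[of n] enat_le_downclosed[of "Suc n" K n] unfolding in_phase_def by auto
  then show ?thesis unfolding predicted_deadline_def by auto
qed

lemma eventually_predicted_deadline_left:
  assumes "0 < t"
  shows "eventually (\<lambda>v. predicted_deadline w ts K v = predicted_deadline w ts K t) (at_left t)"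
proof -
  have "(\<exists>n. enat (Suc n) \<le> K \<and> ts n < t \<and> \<not> ts (Suc n) < t) \<or> (\<exists>k. K = enat k \<and> ts k < t)"
    using moments_cover[of "\<lambda>i. ts i < t" t] ts_0 assms by force
  then show ?thesis
  proof (elim disjE exE conjE)
    fix n assume "enat (Suc n) \<le> K" "ts n < t" "\<not> ts (Suc n) < t"
    then have "in_phase ts K n v" if "v \<in> {ts n<..t}" for v
      using that unfolding in_phase_def by auto
    then have "predicted_deadline w ts K v = phase_deadline w ts n" if "v \<in> {ts n<..t}" for v
      using that predicted_deadline_in_phase by blast
    then show ?thesis
      using \<open>ts n < t\<close> by (intro eventually_at_leftI[of "ts n"]) auto
  next
    fix k assume "K = enat k" "ts k < t"
    then show ?thesis
      using predicted_deadline_final by (intro eventually_at_leftI[of "ts k"]) auto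
  qed
qed

lemma predicted_deadline_phase_start:
  assumes "enat (Suc n) \<le> K" "ts n \<le> u" "u < ts (Suc n)"
  shows "predicted_deadline w ts K u = phase_deadline w ts n
         \<or> (\<exists>m. n = Suc m \<and> u = ts n \<and> predicted_deadline w ts K u = phase_deadline w ts m)"
proof (cases "u = ts n")
  case True
  show ?thesis
  proof (cases n)
    case 0
    then show ?thesis
      using True ts_0 predicted_deadline_nonpos[of u] phase_deadline_simps(1)[of w ts 0] by simp
  next
    case (Suc m)
    then have "in_phase ts K m u"
      using True assms ts_less[of n m] enat_le_downclosed[of "Suc n" K n] unfolding in_phase_def by auto
    then show ?thesis using Suc True predicted_deadline_in_phase by auto
  qed
next
  case False
  then have "in_phase ts K n u" using assms unfolding in_phase_def by auto
  then show ?thesis using predicted_deadline_in_phase by simp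
qed

lemma eventually_predicted_deadline_right:
  assumes "0 \<le> u" "deadline (\<rho> u) x = predicted_deadline w ts K u"
  shows "eventually (\<lambda>v. predicted_deadline w ts K v = next_deadline w u (\<rho> u) x) (at_right u)"
proof -
  have "(\<exists>n. enat (Suc n) \<le> K \<and> ts n \<le> u \<and> \<not> ts (Suc n) \<le> u) \<or> (\<exists>k. K = enat k \<and> ts k \<le> u)"
    using moments_cover[of "\<lambda>i. ts i \<le> u" u] ts_0 assms(1) by force
  then show ?thesis
  proof (elim disjE exE conjE)
    fix n assume n: "enat (Suc n) \<le> K" "ts n \<le> u" "\<not> ts (Suc n) \<le> u"
    have "trackstatus (\<rho> u) x = phase_status n" using trackstatus_phase n by simp
    moreover have "deadline (\<rho> u) x = phase_deadline w ts n
        \<or> (\<exists>m. n = Suc m \<and> u = ts n \<and> deadline (\<rho> u) x = phase_deadline w ts m)"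
      using predicted_deadline_phase_start[of n u w] n assms(2) by simp
    ultimately have "next_deadline w u (\<rho> u) x = phase_deadline w ts n"
      by (rule next_deadline_phase)
    moreover have "in_phase ts K n v" if "v \<in> {u<..<ts (Suc n)}" for v
      using that n unfolding in_phase_def by auto
    ultimately show ?thesis
      using predicted_deadline_in_phase n(3) by (intro eventually_at_rightI[of u "ts (Suc n)"]) auto
  next
    fix k assume k: "K = enat k" "ts k \<le> u"
    then have "next_deadline w u (\<rho> u) x = PInf"
      using trackstatus_final unfolding next_deadline_def by auto
    then show ?thesis
      using eventually_at_right_less[of u] k predicted_deadline_final
      by (auto elim: eventually_mono)
  qed
qed

lemma predicted_deadline_Fin_coming:
  assumes "0 \<le> w" "w < dmin" "predicted_deadline w ts K u = Fin u"
  shows "trackstatus (\<rho> u) x = Coming"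
proof -
  obtain n where n: "in_phase ts K n u"
    using assms(3) unfolding predicted_deadline_def by (auto split: if_splits)
  then have Fin: "phase_deadline w ts n = Fin u"
    using assms(3) predicted_deadline_in_phase by simp
  obtain q where q: "n = 3*q+1 \<or> n = 3*q+2" and u: "u = ts (3*q+1) + w"
  proof (cases n rule: mod3_cases)
    case (empty q)
    then show ?thesis using Fin by simp
  next
    case (coming q)
    then show ?thesis using Fin that[of q] by simp
  next
    case (crossing q)
    then show ?thesis using Fin that[of q] by simp
  qed
  then have "3*q+2 \<le> Suc n" by auto
  then have "enat (3*q+2) \<le> K"
    using n enat_le_downclosed unfolding in_phase_def by blast
  moreover have "ts (3*q+1) \<le> u" "u < ts (3*q+2)"
    using coming_duration[OF \<open>enat (3*q+2) \<le> K\<close>] u assms(1,2) by auto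
  ultimately show ?thesis using trackstatus_phase[of "3*q+1" u] by simp
qed

lemma predicted_deadline_empty_phase:
  assumes "enat (3*i+1) \<le> K" "t \<in> {ts (3*i)<..ts (3*i+1)}"
  shows "predicted_deadline w ts K t = PInf"
  using assms predicted_deadline_in_phase[of "3*i" t] unfolding in_phase_def by auto

lemma predicted_deadline_active:
  assumes "enat (3*i+3) \<le> K" "t \<in> {ts (3*i+1)<..ts (3*i+3)}"
  shows "predicted_deadline w ts K t = Fin (ts (3*i+1) + w)"
proof (cases "t \<le> ts (3*i+2)")
  case True
  then have "in_phase ts K (3*i+1) t"
    using assms enat_le_downclosed[of "3*i+3" K "3*i+2"] unfolding in_phase_def by auto
  then show ?thesis using predicted_deadline_in_phase by simp
next
  case False
  then have "in_phase ts K (3*i+2) t"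
    using assms unfolding in_phase_def by (auto simp: numeral_3_eq_3)
  then show ?thesis using predicted_deadline_in_phase by simp
qed

lemma predicted_deadline_lower_bound:
  assumes no_crossing: "\<forall>v\<in>{a<..<b}. trackstatus (\<rho> v) x \<noteq> Incrossing"
    and t: "t \<in> {a<..<b}"
  shows "xle (Fin (b - (dmax - w))) (predicted_deadline w ts K t)"
proof (cases "\<exists>n. in_phase ts K n t")
  case False
  then show ?thesis by (simp add: predicted_deadline_def)
next
  case True
  then obtain n where n: "in_phase ts K n t" by blast
  then have lt: "ts n < t" "t \<le> ts (Suc n)" "enat (Suc n) \<le> K" unfolding in_phase_def by auto
  show ?thesis
  proof (cases n rule: mod3_cases)
    case (empty q)
    then show ?thesis using n predicted_deadline_in_phase by simp
  next
    case (coming q)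
    have K3: "enat (Suc (3*q+2)) \<le> K" using crossing_completes lt(3) coming by simp
    have "b \<le> ts (3*q+2)"
    proof (rule ccontr)
      assume "\<not> b \<le> ts (3*q+2)"
      then have "ts (3*q+2) \<in> {a<..<b}" using t lt coming by auto
      moreover have "trackstatus (\<rho> (ts (3*q+2))) x = Incrossing"
        using trackstatus_phase[of "3*q+2"] ts_less[of "Suc (3*q+2)" "3*q+2"] K3 by simp
      ultimately show False using no_crossing by blast
    qed
    moreover have "ts (3*q+2) - ts (3*q+1) \<le> dmax" using coming_duration lt(3) coming by simp
    ultimately have "b - (dmax - w) \<le> ts (3*q+1) + w" by linarith
    then show ?thesis using n predicted_deadline_in_phase coming by simp
  next
    case (crossing q)
    define v where "v = (max a (ts n) + t) / 2"
    have "v \<in> {a<..<b}" "ts n \<le> v" "v < ts (Suc n)" using t lt unfolding v_def by auto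
    then show ?thesis using no_crossing trackstatus_phase lt(3) crossing by fastforce
  qed
qed

end

section \<open>The controller's deadline update\<close>

lemma upd_of_components:
  "uDL (upd_of dc dop dm a ct s) = (if a = Controller then uDL (upd_ctrl dc dop dm ct s) else {})"
  "uDir (upd_of dc dop dm a ct s) = (if a = Controller then uDir (upd_ctrl dc dop dm ct s) else {})"
  "uGS (upd_of dc dop dm a ct s) = (if a = Gate then uGS (upd_gate s) else {})"
  by (cases a; simp add: upd_of_def upd_gate_def upd_ctrl_def)+

lemma consistent_upd_ctrl:
  assumes "0 < dop" "\<And>y. deadline s y = Fin ct \<Longrightarrow> trackstatus s y = Coming"
  shows "consistent (upd_ctrl dc dop dm ct s)"
proof -
  have "\<not> safe_to_open dop ct s" if "deadline s y = Fin ct" for y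
  proof -
    have "trackstatus s y \<noteq> Empty" "\<not> xlt (Fin (ct + dop)) (deadline s y)"
      using that assms by auto
    then show ?thesis unfolding safe_to_open_def by blast
  qed
  then show ?thesis unfolding consistent_def upd_ctrl_def by auto
qed

lemma deadline_upd_ctrl:
  "(if \<exists>a. (y, a) \<in> uDL (upd_ctrl dc dop dm ct s) then THE a. (y, a) \<in> uDL (upd_ctrl dc dop dm ct s)
    else deadline s y) = next_deadline (W dc dm) ct s y"
  by (cases "trackstatus s y"; cases "deadline s y") (simp_all add: upd_ctrl_def next_deadline_def)

lemma deadline_exec:
  assumes "consistent (upd_ctrl dc dop dm ct s)"
  shows "deadline (exec dc dop dm M ct s) y =
           (if Controller \<in> M then next_deadline (W dc dm) ct s y else deadline s y)"
proof -
  define U where "U = \<lparr>uDL = (\<Union>a\<in>M. uDL (upd_of dc dop dm a ct s)),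
                        uDir = (\<Union>a\<in>M. uDir (upd_of dc dop dm a ct s)),
                        uGS = (\<Union>a\<in>M. uGS (upd_of dc dop dm a ct s))\<rparr>"
  have exec: "exec dc dop dm M ct s = (if consistent U then apply_upd U s else s)"
    unfolding exec_def U_def by simp
  have DL: "uDL U = (if Controller \<in> M then uDL (upd_ctrl dc dop dm ct s) else {})"
    unfolding U_def by (auto simp: upd_of_components split: if_splits)
  have "uDir U = (if Controller \<in> M then uDir (upd_ctrl dc dop dm ct s) else {})"
    "uGS U \<subseteq> uGS (upd_gate s)"
    unfolding U_def by (auto simp: upd_of_components split: if_splits)
  moreover have "\<forall>g\<in>uGS (upd_gate s). \<forall>h\<in>uGS (upd_gate s). g = h"
    unfolding upd_gate_def by auto
  ultimately have consistent: "Controller \<in> M \<Longrightarrow> consistent U"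
    using assms unfolding consistent_def DL by (auto simp: subset_iff)
  have apply_upd: "deadline (apply_upd U s) y =
      (if \<exists>a. (y, a) \<in> uDL U then THE a. (y, a) \<in> uDL U else deadline s y)"
    by (simp add: apply_upd_def)
  show ?thesis
  proof (cases "Controller \<in> M")
    case True
    then have "deadline (exec dc dop dm M ct s) y = deadline (apply_upd U s) y"
      using exec consistent by simp
    also have "\<dots> = next_deadline (W dc dm) ct s y"
      unfolding apply_upd DL if_P[OF True] by (rule deadline_upd_ctrl)
    finally show ?thesis using True by simp
  next
    case False
    then show ?thesis using apply_upd unfolding exec DL by simp
  qed
qed

lemma next_deadline_if_unchanged:
  assumes "\<not> changes (upd_ctrl dc dop dm ct s) s"
  shows "next_deadline (W dc dm) ct s y = deadline s y"
proof -
  have "deadline s y = a" if "(y, a) \<in> uDL (upd_ctrl dc dop dm ct s)" for a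
    using assms that unfolding changes_def by blast
  then show ?thesis
    by (cases "trackstatus s y"; cases "deadline s y") (auto simp: upd_ctrl_def next_deadline_def)
qed

lemma deadline_rlim:
  assumes run: "is_run dc dop dm \<rho>" and imm: "immediate dc dop dm \<rho> Controller"
    and "0 \<le> u" and cons: "consistent (upd_ctrl dc dop dm u (\<rho> u))"
  shows "deadline (rlim \<rho> u) y = next_deadline (W dc dm) u (\<rho> u) y"
proof (cases "enabled dc dop dm Controller u (\<rho> u)")
  case True
  then obtain M where "Controller \<in> M" "rlim \<rho> u = exec dc dop dm M u (\<rho> u)"
    using imm \<open>0 \<le> u\<close> unfolding immediate_def fires_def by blast
  then show ?thesis using deadline_exec[OF cons] by simp
next
  case False
  then have unchanged: "next_deadline (W dc dm) u (\<rho> u) y = deadline (\<rho> u) y"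
    using cons next_deadline_if_unchanged unfolding enabled_def upd_of_def by fastforce
  show ?thesis
  proof (cases "rlim \<rho> u = \<rho> u")
    case False
    then obtain M where "rlim \<rho> u = exec dc dop dm M u (\<rho> u)"
      using run \<open>0 \<le> u\<close> unfolding is_run_def by blast
    then show ?thesis using deadline_exec[OF cons] unchanged by simp
  qed (simp add: unchanged)
qed

section \<open>One-sided limits of runs and induction over time\<close>

lemma the_eventually_const:
  assumes "F \<noteq> bot" "eventually (\<lambda>v. f v = c) F"
  shows "(THE c. eventually (\<lambda>v. f v = c) F) = c"
proof (rule the_equality)
  fix c' assume "eventually (\<lambda>v. f v = c') F"
  then show "c' = c"
    using eventually_happens'[OF assms(1) eventually_conj[OF assms(2)]] by auto
qed (rule assms(2))

lemma eventually_at_right_iff_interval: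
  fixes t :: real
  shows "eventually P (at_right t) \<longleftrightarrow> (\<exists>e>0. \<forall>u\<in>{t<..<t+e}. P u)"
proof
  assume "eventually P (at_right t)"
  then obtain b where "t < b" "\<forall>v>t. v < b \<longrightarrow> P v"
    unfolding eventually_at_right_field by blast
  then show "\<exists>e>0. \<forall>u\<in>{t<..<t+e}. P u" by (intro exI[of _ "b - t"]) auto
next
  assume "\<exists>e>0. \<forall>u\<in>{t<..<t+e}. P u"
  then obtain e where "0 < e" "\<forall>u\<in>{t<..<t+e}. P u" by blast
  then show "eventually P (at_right t)" by (intro eventually_at_rightI[of t "t + e"]) auto
qed

lemma eventually_at_left_iff_interval:
  fixes t :: real
  shows "eventually P (at_left t) \<longleftrightarrow> (\<exists>e>0. \<forall>u\<in>{t-e<..<t}. P u)"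
proof
  assume "eventually P (at_left t)"
  then obtain b where "b < t" "\<forall>v>b. v < t \<longrightarrow> P v"
    unfolding eventually_at_left_field by blast
  then show "\<exists>e>0. \<forall>u\<in>{t-e<..<t}. P u" by (intro exI[of _ "t - b"]) auto
next
  assume "\<exists>e>0. \<forall>u\<in>{t-e<..<t}. P u"
  then obtain e where "0 < e" "\<forall>u\<in>{t-e<..<t}. P u" by blast
  then show "eventually P (at_left t)" by (intro eventually_at_leftI[of "t - e"]) auto
qed

lemma rlim_eqI:
  fixes \<rho> :: "real \<Rightarrow> 'a"
  assumes "eventually (\<lambda>v. \<rho> v = c) (at_right t)"
  shows "rlim \<rho> t = c"
  unfolding rlim_def eventually_at_right_iff_interval[symmetric]
  using the_eventually_const[OF _ assms] by simp

lemma llim_eqI: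
  fixes \<rho> :: "real \<Rightarrow> 'a"
  assumes "eventually (\<lambda>v. \<rho> v = c) (at_left t)"
  shows "llim \<rho> t = c"
  unfolding llim_def eventually_at_left_iff_interval[symmetric]
  using the_eventually_const[OF _ assms] by simp

lemma pre_run_constant_piece:
  fixes P :: "real \<Rightarrow> bool"
  assumes "pre_run \<rho>" "0 < \<tau>" "P 0" "\<not> P \<tau>"
  shows "\<exists>a b c. P a \<and> \<not> P b \<and> (\<forall>u\<in>{a<..<b}. \<rho> u = c)"
proof -
  obtain L :: "real list" where L: "length L \<ge> 2" "L ! 0 = 0" "last L = \<tau>"
    "\<forall>i. Suc i < length L \<longrightarrow> (\<exists>c. \<forall>u\<in>{L ! i<..<L ! Suc i}. \<rho> u = c)"
    using assms(1,2) unfolding pre_run_def by blast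
  then have "L ! (length L - 1) = \<tau>" using last_conv_nth[of L] by fastforce
  then obtain i where "i < length L - 1" "P (L ! i)" "\<not> P (L ! Suc i)"
    using ex_least_nat_less[of "\<lambda>i. \<not> P (L ! i)" "length L - 1"] L(2) assms(3,4) by auto
  then show ?thesis using L(4) by (metis less_diff_conv add.commute plus_1_eq_Suc)
qed

lemma eventually_rlim:
  assumes "pre_run \<rho>" "0 \<le> t"
  shows "eventually (\<lambda>v. \<rho> v = rlim \<rho> t) (at_right t)"
proof -
  obtain a b c where "a \<le> t" "\<not> b \<le> t" "\<forall>u\<in>{a<..<b}. \<rho> u = c"
    using pre_run_constant_piece[of \<rho> "t + 1" "\<lambda>s. s \<le> t"] assms by auto
  then have "eventually (\<lambda>v. \<rho> v = c) (at_right t)"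
    by (intro eventually_at_rightI[of t b]) auto
  then show ?thesis using rlim_eqI by (metis (mono_tags, lifting) eventually_mono)
qed

lemma eventually_llim:
  assumes "pre_run \<rho>" "0 < t"
  shows "eventually (\<lambda>v. \<rho> v = llim \<rho> t) (at_left t)"
proof -
  obtain a b c where "a < t" "\<not> b < t" "\<forall>u\<in>{a<..<b}. \<rho> u = c"
    using pre_run_constant_piece[of \<rho> t "\<lambda>s. s < t"] assms by auto
  then have "eventually (\<lambda>v. \<rho> v = c) (at_left t)"
    by (intro eventually_at_leftI[of a]) auto
  then show ?thesis using llim_eqI by (metis (mono_tags, lifting) eventually_mono)
qed

lemma nonneg_real_induct [consumes 1, case_names left right]:
  fixes P :: "real \<Rightarrow> bool"
  assumes "0 \<le> t"
    and left: "\<And>u. 0 \<le> u \<Longrightarrow> (\<And>v. 0 \<le> v \<Longrightarrow> v < u \<Longrightarrow> P v) \<Longrightarrow> P u"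
    and right: "\<And>u. 0 \<le> u \<Longrightarrow> (\<And>v. 0 \<le> v \<Longrightarrow> v \<le> u \<Longrightarrow> P v) \<Longrightarrow> eventually P (at_right u)"
  shows "P t"
proof (rule ccontr)
  assume "\<not> P t"
  define S where "S = {v. 0 \<le> v \<and> \<not> P v}"
  have "S \<noteq> {}" "bdd_below S" using \<open>\<not> P t\<close> \<open>0 \<le> t\<close> unfolding S_def by auto
  define m where "m = Inf S"
  have "0 \<le> m" unfolding m_def S_def using \<open>S \<noteq> {}\<close> by (intro cInf_greatest) (auto simp: S_def)
  have below: "P v" if "0 \<le> v" "v < m" for v
    using that cInf_lower[OF _ \<open>bdd_below S\<close>, of v] unfolding m_def S_def by force
  then have "P m" using left \<open>0 \<le> m\<close> by blast
  then have "P v" if "0 \<le> v" "v \<le> m" for v using below that by force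
  then obtain b where "m < b" "\<forall>v>m. v < b \<longrightarrow> P v"
    using right[OF \<open>0 \<le> m\<close>] unfolding eventually_at_right_field by blast
  have "b \<le> v" if "v \<in> S" for v
  proof (rule ccontr)
    assume "\<not> b \<le> v"
    moreover have "m \<le> v" "v \<noteq> m"
      using that \<open>P m\<close> cInf_lower[OF _ \<open>bdd_below S\<close>] unfolding m_def S_def by auto
    ultimately have "P v" using \<open>\<forall>v>m. v < b \<longrightarrow> P v\<close> by auto
    then show False using that unfolding S_def by blast
  qed
  then have "b \<le> Inf S" using \<open>S \<noteq> {}\<close> by (intro cInf_greatest)
  then show False using \<open>m < b\<close> unfolding m_def by simp
qed

section \<open>The deadline invariant\<close>

locale scheduled_run =
  fixes dclose dopen dmin dmax :: real and \<rho> :: "real \<Rightarrow> ('tr::finite) st"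
    and tsf :: "'tr \<Rightarrow> nat \<Rightarrow> real" and Kf :: "'tr \<Rightarrow> enat"
  assumes regular: "regular_run dclose dopen dmin dmax \<rho>"
    and dclose_pos: "0 < dclose" and dopen_pos: "0 < dopen" and dclose_less: "dclose < dmin"
    and moments: "\<And>y. significant_moments dmin dmax \<rho> y (tsf y) (Kf y)"
begin

abbreviation predicted :: "'tr \<Rightarrow> real \<Rightarrow> xreal" where
  "predicted y \<equiv> predicted_deadline (W dclose dmin) (tsf y) (Kf y)"

lemma schedule: "track_schedule dmin dmax \<rho> y (tsf y) (Kf y)"
  using moments dclose_pos dclose_less by unfold_locales auto

lemma is_run_\<rho>: "is_run dclose dopen dmin \<rho>"
  and pre_run_\<rho>: "pre_run \<rho>"
  using regular unfolding regular_run_def is_run_def by auto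

lemma deadline_from_left:
  assumes "0 < u" "\<And>v. 0 < v \<Longrightarrow> v < u \<Longrightarrow> \<forall>y. deadline (\<rho> v) y = predicted y v"
  shows "deadline (\<rho> u) y = predicted y u"
proof -
  have "eventually (\<lambda>v. \<rho> v = llim \<rho> u \<and> (\<forall>y. predicted y v = predicted y u) \<and> v \<in> {0<..<u})
      (at_left u)"
    using eventually_llim[OF pre_run_\<rho> \<open>0 < u\<close>] eventually_at_left_real[OF \<open>0 < u\<close>]
      eventually_all_finite[OF track_schedule.eventually_predicted_deadline_left[OF schedule \<open>0 < u\<close>]]
    by eventually_elim auto
  then have "\<exists>v. \<rho> v = llim \<rho> u \<and> (\<forall>y. predicted y v = predicted y u) \<and> v \<in> {0<..<u}"
    by (rule eventually_happens'[OF trivial_limit_at_left_real])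
  then obtain v where v: "\<rho> v = llim \<rho> u" "\<forall>y. predicted y v = predicted y u" "0 < v" "v < u"
    by auto
  have "deadline (llim \<rho> u) = deadline (\<rho> u)"
    using is_run_\<rho> \<open>0 < u\<close> unfolding is_run_def by metis
  then show ?thesis using v assms(2)[of v] by auto
qed

lemma deadline_to_right:
  assumes "0 \<le> u" and now: "\<And>y. deadline (\<rho> u) y = predicted y u"
  shows "eventually (\<lambda>v. \<forall>y. deadline (\<rho> v) y = predicted y v) (at_right u)"
proof -
  let ?w = "W dclose dmin"
  have "0 \<le> ?w" "?w < dmin" using dclose_pos dclose_less unfolding W_def by auto
  then have "consistent (upd_ctrl dclose dopen dmin u (\<rho> u))"
    using consistent_upd_ctrl[OF dopen_pos] track_schedule.predicted_deadline_Fin_coming[OF schedule]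
      now by metis
  then have rlim: "deadline (rlim \<rho> u) y = next_deadline ?w u (\<rho> u) y" for y
    using deadline_rlim[OF is_run_\<rho> _ \<open>0 \<le> u\<close>] regular unfolding regular_run_def by blast
  have "eventually (\<lambda>v. \<rho> v = rlim \<rho> u \<and> (\<forall>y. predicted y v = next_deadline ?w u (\<rho> u) y))
      (at_right u)"
    using eventually_rlim[OF pre_run_\<rho> \<open>0 \<le> u\<close>] eventually_all_finite[OF
        track_schedule.eventually_predicted_deadline_right[OF schedule \<open>0 \<le> u\<close> now]]
    by eventually_elim auto
  then show ?thesis using rlim by (auto elim: eventually_mono)
qed

lemma deadline_invariant:
  assumes "0 \<le> t"
  shows "deadline (\<rho> t) y = predicted y t"
proof -
  have "\<forall>y. deadline (\<rho> t) y = predicted y t"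
    using assms
  proof (induction t rule: nonneg_real_induct)
    case (left u)
    show ?case
    proof (cases "u = 0")
      case True
      then show ?thesis
        using regular track_schedule.predicted_deadline_nonpos[OF schedule]
        unfolding regular_run_def initial_state_def by auto
    next
      case False
      with left(1) have "0 < u" by simp
      have "\<forall>y. deadline (\<rho> v) y = predicted y v" if "0 < v" "v < u" for v
        using left(2) that by simp
      then show ?thesis using deadline_from_left[OF \<open>0 < u\<close>] by blast
    qed
  next
    case (right u)
    then show ?case using deadline_to_right by simp
  qed
  then show ?thesis by blast
qed

end

lemma deadline_eq_predicted:
  fixes \<rho> :: "real \<Rightarrow> ('tr::finite) st"
  assumes run: "regular_run dclose dopen dmin dmax \<rho>"
    and "0 < dclose" "0 < dopen" "dclose < dmin"
    and "significant_moments dmin dmax \<rho> x ts K" "0 \<le> t"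
  shows "deadline (\<rho> t) x = predicted_deadline (W dclose dmin) ts K t"
proof -
  obtain tsf Kf where "\<And>y. significant_moments dmin dmax \<rho> y (tsf y) (Kf y)"
    using run unfolding regular_run_def by metis
  then have "significant_moments dmin dmax \<rho> y ((tsf(x := ts)) y) ((Kf(x := K)) y)" for y
    using assms(5) by simp
  then interpret scheduled_run dclose dopen dmin dmax \<rho> "tsf(x := ts)" "Kf(x := K)"
    using assms(1-4) by unfold_locales
  show ?thesis using deadline_invariant[OF \<open>0 \<le> t\<close>, of x] by simp
qed

lemma Delta_close_eq: "Delta_close dclose dmin dmax = dmax - W dclose dmin"
  by (simp add: Delta_close_def W_def)

theorem mainTheorem3:
  fixes dclose dopen dmin dmax :: real
    and \<rho> :: "real \<Rightarrow> ('tr::finite) st"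
    and x :: 'tr and ts :: "nat \<Rightarrow> real" and K :: enat
  assumes "0 < dclose" "0 < dopen" "0 < dmin" "0 < dmax"
    and "dclose < dmin" "dmin \<le> dmax"
    and "regular_run dclose dopen dmin dmax \<rho>"
    and "significant_moments dmin dmax \<rho> x ts K"
  shows "(deadline (\<rho> 0) x = PInf
       \<and> (\<forall>i. enat (3*i+1) \<le> K \<longrightarrow>
            (\<forall>t\<in>{ts (3*i)<..ts (3*i+1)}. deadline (\<rho> t) x = PInf))
       \<and> (\<forall>i. enat (3*i+3) \<le> K \<longrightarrow>
            (\<forall>t\<in>{ts (3*i+1)<..ts (3*i+3)}.
               deadline (\<rho> t) x = Fin (ts (3*i+1) + W dclose dmin)))
       \<and> (\<forall>k. K = enat k \<longrightarrow> (\<forall>t>ts k. deadline (\<rho> t) x = PInf)))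
     \<and> (\<forall>a b. 0 \<le> a \<and> a < b \<and> (\<forall>t\<in>{a<..<b}. trackstatus (\<rho> t) x \<noteq> Incrossing) \<longrightarrow>
            (\<forall>t\<in>{a<..<b}. xle (Fin (b - Delta_close dclose dmin dmax)) (deadline (\<rho> t) x)))"
proof -
  interpret track_schedule dmin dmax \<rho> x ts K
    using assms(3,8) by unfold_locales
  have dl: "deadline (\<rho> t) x = predicted_deadline (W dclose dmin) ts K t" if "0 \<le> t" for t
    using deadline_eq_predicted[OF assms(7,1,2,5,8) that] .
  have "deadline (\<rho> 0) x = PInf"
    using dl[of 0] predicted_deadline_nonpos[of 0] by simp
  moreover have "deadline (\<rho> t) x = PInf" if "enat (3*i+1) \<le> K" "t \<in> {ts (3*i)<..ts (3*i+1)}" for i t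
    using dl[of t] predicted_deadline_empty_phase[OF that] ts_nonneg[of "3*i"]
      enat_le_downclosed[OF that(1), of "3*i"] that(2) by simp
  moreover have "deadline (\<rho> t) x = Fin (ts (3*i+1) + W dclose dmin)"
    if "enat (3*i+3) \<le> K" "t \<in> {ts (3*i+1)<..ts (3*i+3)}" for i t
    using dl[of t] predicted_deadline_active[OF that] ts_nonneg[of "3*i+1"]
      enat_le_downclosed[OF that(1), of "3*i+1"] that(2) by simp
  moreover have "deadline (\<rho> t) x = PInf" if "K = enat k" "ts k < t" for k t
    using dl[of t] predicted_deadline_final[OF that] ts_nonneg[of k] that by simp
  moreover have "xle (Fin (b - Delta_close dclose dmin dmax)) (deadline (\<rho> t) x)"
    if "0 \<le> a" "\<forall>v\<in>{a<..<b}. trackstatus (\<rho> v) x \<noteq> Incrossing" "t \<in> {a<..<b}" for a b t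
    using dl[of t] predicted_deadline_lower_bound[OF that(2,3)] that(1,3)
    unfolding Delta_close_eq by simp
  ultimately show ?thesis by blast
qed

end
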